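(* Let $n\ge2$, let $L_1,\dots,L_n$ be finite lists of reals, each sorted in nondecreasing order, and fix $0\le\tau_{min}\le\tau_{max}$ and $\delta\ge0$. If at least one valid tuple exists, then Algorithm-Chain (for the chain or ordered-sibling constraints) and Algorithm-Sibling (for the unordered-sibling constraints) find a valid tuple.
   Context: A tuple is a choice of indices $(p_1,\dots,p_n)$, with $p_i$ an index into $L_i$; its values are $x_i=L_i[p_i]$. The three constraint types are: - Chain: $x_{i+1}-x_i\in[\tau_{min},\tau_{max}]$ for $i=1,\dots,n-1$. - Ordered sibling: $x_{i+1}-x_i\in[-\delta,\delta]$ for $i=1,\dots,n-1$. - Unordered sibling: $|x_i-x_j|\le(n-1)\delta$ for all $i\ne j$. A tuple satisfying the constraints in force is called valid. Both algorithms keep a pointer into each list, initially at the first entry, and search for a valid tuple among the entries at or after the pointers. Algorithm-Chain searches as follows. While the current entries are not valid, take the smallest $i$ such that $(x_i,x_{i+1})$ violates $x_{i+1}-x_i\in[a,b]$, where $[a,b]=[\tau_{min},\tau_{max}]$ for chains and $[a,b]=[-\delta,\delta]$ for ordered siblings. If $x_{i+1}-x_i>b$, advance the pointer of $L_i$; if $x_{i+1}-x_i<a$, advance the pointer of $L_{i+1}$. The search stops when the current entries are valid or a pointer runs past the end of its list. Algorithm-Sibling searches under the unordered-sibling constraints. It repeatedly advances the pointer of a list whose current entry is too small to belong to any valid tuple whose other entries lie at or after the current pointers, and stops at a valid tuple or when a list is exhausted. *)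

theory Defs
  imports Main "HOL.Real"
begin

text \<open>Lists are indexed 0..n-1 (the paper uses 1..n). A tuple is a pointer
function p, p i being the index into list L i; its values are x i = L i ! p i.\<close>

definition in_range :: "nat \<Rightarrow> (nat \<Rightarrow> real list) \<Rightarrow> (nat \<Rightarrow> nat) \<Rightarrow> bool" where
  "in_range n L p \<longleftrightarrow> (\<forall>i<n. p i < length (L i))"

definition tval :: "(nat \<Rightarrow> real list) \<Rightarrow> (nat \<Rightarrow> nat) \<Rightarrow> nat \<Rightarrow> real" where
  "tval L p i = L i ! p i"

text \<open>Consecutive differences in [a,b]: chain constraint with [a,b] = [tau_min,tau_max],
ordered-sibling constraint with [a,b] = [-delta,delta].\<close>
definition consec_ok :: "real \<Rightarrow> real \<Rightarrow> nat \<Rightarrow> (nat \<Rightarrow> real list) \<Rightarrow> (nat \<Rightarrow> nat) \<Rightarrow> bool" where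
  "consec_ok a b n L p \<longleftrightarrow>
     (\<forall>i. Suc i < n \<longrightarrow> a \<le> tval L p (Suc i) - tval L p i \<and> tval L p (Suc i) - tval L p i \<le> b)"

definition valid_consec :: "real \<Rightarrow> real \<Rightarrow> nat \<Rightarrow> (nat \<Rightarrow> real list) \<Rightarrow> (nat \<Rightarrow> nat) \<Rightarrow> bool" where
  "valid_consec a b n L p \<longleftrightarrow> in_range n L p \<and> consec_ok a b n L p"

definition valid_sib :: "real \<Rightarrow> nat \<Rightarrow> (nat \<Rightarrow> real list) \<Rightarrow> (nat \<Rightarrow> nat) \<Rightarrow> bool" where
  "valid_sib \<delta> n L p \<longleftrightarrow> in_range n L p \<and>
     (\<forall>i<n. \<forall>j<n. i \<noteq> j \<longrightarrow> \<bar>tval L p i - tval L p j\<bar> \<le> (real n - 1) * \<delta>)"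

definition chain_step :: "real \<Rightarrow> real \<Rightarrow> nat \<Rightarrow> (nat \<Rightarrow> real list) \<Rightarrow> (nat \<Rightarrow> nat) \<Rightarrow> (nat \<Rightarrow> nat) \<Rightarrow> bool" where
  "chain_step a b n L p q \<longleftrightarrow> in_range n L p \<and> \<not> consec_ok a b n L p \<and>
     (let d = (\<lambda>i. tval L p (Suc i) - tval L p i);
          i = (LEAST i. Suc i < n \<and> \<not> (a \<le> d i \<and> d i \<le> b))
      in q = (if d i > b then p(i := Suc (p i)) else p(Suc i := Suc (p (Suc i)))))"

definition sib_step :: "real \<Rightarrow> nat \<Rightarrow> (nat \<Rightarrow> real list) \<Rightarrow> (nat \<Rightarrow> nat) \<Rightarrow> (nat \<Rightarrow> nat) \<Rightarrow> bool" where
  "sib_step \<delta> n L p q \<longleftrightarrow> in_range n L p \<and> \<not> valid_sib \<delta> n L p \<and>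
     (\<exists>i<n. \<not> (\<exists>r. valid_sib \<delta> n L r \<and> r i = p i \<and> (\<forall>j<n. p j \<le> r j))
            \<and> q = p(i := Suc (p i)))"

definition finds_valid :: "((nat \<Rightarrow> nat) \<Rightarrow> (nat \<Rightarrow> nat) \<Rightarrow> bool) \<Rightarrow> ((nat \<Rightarrow> nat) \<Rightarrow> bool) \<Rightarrow> bool" where
  "finds_valid step valid \<longleftrightarrow>
     \<not> (\<exists>f. f 0 = (\<lambda>_. 0) \<and> (\<forall>k. step (f k) (f (Suc k)))) \<and>
     (\<forall>p. step\<^sup>*\<^sup>* (\<lambda>_. 0) p \<and> \<not> (\<exists>q. step p q) \<longrightarrow> valid p)"

end

theory Submission
  imports Defs
begin

text \<open>Both searches only ever advance a single pointer by one, and they never advance a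
pointer past the corresponding pointer of a valid tuple that still lies at or after the current
pointers. Hence, if a valid tuple exists, the pointers always stay below some valid tuple:
the pointer sum increases by one per step and is bounded by the total list length, so every run
is finite, and a search that cannot move while some valid tuple lies ahead must already sit on a
valid tuple.\<close>

definition ptr_le :: "nat \<Rightarrow> (nat \<Rightarrow> nat) \<Rightarrow> (nat \<Rightarrow> nat) \<Rightarrow> bool" where
  "ptr_le n p r \<longleftrightarrow> (\<forall>i<n. p i \<le> r i)"

lemma in_range_if_ptr_le: "in_range n L r \<Longrightarrow> ptr_le n p r \<Longrightarrow> in_range n L p"
  unfolding in_range_def ptr_le_def using le_less_trans by blast

lemma tval_mono:
  assumes "sorted (L k)" "p k \<le> r k" "r k < length (L k)"
  shows "tval L p k \<le> tval L r k"
  using assms unfolding tval_def by (simp add: sorted_nth_mono)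

lemma sum_fun_upd_Suc:
  fixes p :: "nat \<Rightarrow> nat"
  assumes "i < n"
  shows "(\<Sum>j<n. (p(i := Suc (p i))) j) = (\<Sum>j<n. p j) + 1"
proof -
  have "(\<Sum>j<n. (p(i := Suc (p i))) j) = (\<Sum>j<n. p j + (if j = i then 1 else 0))"
    by (rule sum.cong) auto
  also have "\<dots> = (\<Sum>j<n. p j) + 1" using assms by (simp add: sum.distrib)
  finally show ?thesis .
qed

locale pointer_search =
  fixes n :: nat and L :: "nat \<Rightarrow> real list"
    and step :: "(nat \<Rightarrow> nat) \<Rightarrow> (nat \<Rightarrow> nat) \<Rightarrow> bool"
    and valid :: "(nat \<Rightarrow> nat) \<Rightarrow> bool"
  assumes valid_in_range: "valid r \<Longrightarrow> in_range n L r"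
    and step_advances_below_valid: "step p q \<Longrightarrow> valid r \<Longrightarrow> ptr_le n p r \<Longrightarrow>
      \<exists>i<n. q = p(i := Suc (p i)) \<and> p i < r i"
    and step_exists_below_valid: "valid r \<Longrightarrow> ptr_le n p r \<Longrightarrow> \<not> valid p \<Longrightarrow> \<exists>q. step p q"
begin

definition below_valid :: "(nat \<Rightarrow> nat) \<Rightarrow> bool" where
  "below_valid p \<longleftrightarrow> (\<exists>r. valid r \<and> ptr_le n p r)"

lemma below_valid_step:
  assumes "below_valid p" "step p q"
  shows "below_valid q"
proof -
  from assms(1) obtain r where r: "valid r" "ptr_le n p r" unfolding below_valid_def by blast
  from step_advances_below_valid[OF assms(2) r] obtain i
    where "i < n" "q = p(i := Suc (p i))" "p i < r i" by blast
  with r show ?thesis unfolding below_valid_def ptr_le_def by auto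
qed

lemma below_valid_reachable:
  assumes "\<exists>r. valid r" "step\<^sup>*\<^sup>* (\<lambda>_. 0) p"
  shows "below_valid p"
  using assms(2)
proof induction
  case base
  then show ?case using assms(1) unfolding below_valid_def ptr_le_def by auto
next
  case (step q q')
  then show ?case using below_valid_step by blast
qed

lemma sum_le_total_length_if_below_valid:
  assumes "below_valid p"
  shows "(\<Sum>j<n. p j) \<le> (\<Sum>j<n. length (L j))"
proof -
  from assms obtain r where r: "valid r" "ptr_le n p r" unfolding below_valid_def by blast
  then have "in_range n L p" using valid_in_range in_range_if_ptr_le by blast
  then show ?thesis unfolding in_range_def by (intro sum_mono) (simp add: less_imp_le)
qed

lemma no_infinite_run:
  assumes "\<exists>r. valid r"
  shows "\<not> (\<exists>f. f 0 = (\<lambda>_. 0) \<and> (\<forall>k. step (f k) (f (Suc k))))"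
proof
  assume "\<exists>f. f 0 = (\<lambda>_. 0) \<and> (\<forall>k. step (f k) (f (Suc k)))"
  then obtain f where f0: "f 0 = (\<lambda>_. 0)" and fs: "\<And>k. step (f k) (f (Suc k))" by blast
  have run: "step\<^sup>*\<^sup>* (\<lambda>_. 0) (f k) \<and> (\<Sum>j<n. f k j) = k" for k
  proof (induction k)
    case 0
    then show ?case using f0 by simp
  next
    case (Suc k)
    then obtain r where "valid r" "ptr_le n (f k) r"
      using below_valid_reachable[OF assms] unfolding below_valid_def by blast
    from step_advances_below_valid[OF fs this] obtain i
      where "i < n" "f (Suc k) = (f k)(i := Suc (f k i))" by blast
    then have "(\<Sum>j<n. f (Suc k) j) = Suc k" using Suc sum_fun_upd_Suc by simp
    moreover have "step\<^sup>*\<^sup>* (\<lambda>_. 0) (f (Suc k))"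
      using Suc fs by (meson rtranclp.rtrancl_into_rtrancl)
    ultimately show ?case by simp
  qed
  define k where "k = Suc (\<Sum>j<n. length (L j))"
  have "below_valid (f k)" using run below_valid_reachable[OF assms] by blast
  with run[of k] show False using sum_le_total_length_if_below_valid unfolding k_def by fastforce
qed

theorem finds_valid:
  assumes "\<exists>r. valid r"
  shows "finds_valid step valid"
proof -
  have "valid p" if "step\<^sup>*\<^sup>* (\<lambda>_. 0) p" "\<not> (\<exists>q. step p q)" for p
    using below_valid_reachable[OF assms that(1)] step_exists_below_valid that(2)
    unfolding below_valid_def by blast
  with no_infinite_run[OF assms] show ?thesis unfolding finds_valid_def by blast
qed

end

lemma chain_step_advances_below_valid:
  assumes sorted: "\<forall>i<n. sorted (L i)"
    and step: "chain_step a b n L p q" and valid: "valid_consec a b n L r" and le: "ptr_le n p r"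
  shows "\<exists>i<n. q = p(i := Suc (p i)) \<and> p i < r i"
proof -
  define d where "d = (\<lambda>i. tval L p (Suc i) - tval L p i)"
  define i where "i = (LEAST i. Suc i < n \<and> \<not> (a \<le> d i \<and> d i \<le> b))"
  from step have "\<not> consec_ok a b n L p"
    and q: "q = (if d i > b then p(i := Suc (p i)) else p(Suc i := Suc (p (Suc i))))"
    unfolding chain_step_def d_def i_def Let_def by auto
  then have "\<exists>i. Suc i < n \<and> \<not> (a \<le> d i \<and> d i \<le> b)"
    unfolding consec_ok_def d_def by blast
  then have "Suc i < n \<and> \<not> (a \<le> d i \<and> d i \<le> b)"
    unfolding i_def by (rule LeastI_ex)
  then have i: "Suc i < n" "\<not> (a \<le> d i \<and> d i \<le> b)" by auto
  have r_ok: "a \<le> tval L r (Suc i) - tval L r i" "tval L r (Suc i) - tval L r i \<le> b"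
    using valid i(1) unfolding valid_consec_def consec_ok_def by auto
  have mono: "tval L p k \<le> tval L r k" if "k < n" for k
    using that sorted le valid tval_mono
    unfolding valid_consec_def in_range_def ptr_le_def by blast
  show ?thesis
  proof (cases "d i > b")
    case True
    \<comment> \<open>an equal left pointer would force the valid tuple's gap above b, too\<close>
    then have "p i \<noteq> r i" using mono[OF i(1)] r_ok(2) unfolding d_def tval_def by force
    then show ?thesis using True q i(1) le unfolding ptr_le_def
      by (intro exI[of _ i]) (auto simp: order_le_neq_trans)
  next
    case False
    then have "p (Suc i) \<noteq> r (Suc i)"
      using i mono[of i] r_ok(1) unfolding d_def tval_def by force
    then show ?thesis using False q i(1) le unfolding ptr_le_def
      by (intro exI[of _ "Suc i"]) (auto simp: order_le_neq_trans)
  qed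
qed

lemma chain_step_exists_below_valid:
  assumes "valid_consec a b n L r" "ptr_le n p r" "\<not> valid_consec a b n L p"
  shows "\<exists>q. chain_step a b n L p q"
proof -
  have "in_range n L p" using assms(1,2) in_range_if_ptr_le unfolding valid_consec_def by blast
  with assms(3) show ?thesis unfolding chain_step_def valid_consec_def Let_def by auto
qed

lemma chain_finds_valid:
  assumes "\<forall>i<n. sorted (L i)" "\<exists>r. valid_consec a b n L r"
  shows "finds_valid (chain_step a b n L) (valid_consec a b n L)"
proof -
  interpret pointer_search n L "chain_step a b n L" "valid_consec a b n L"
    using chain_step_advances_below_valid[OF assms(1)] chain_step_exists_below_valid
    by unfold_locales (auto simp: valid_consec_def)
  show ?thesis using finds_valid assms(2) .
qed

lemma sib_step_advances_below_valid:
  assumes "sib_step \<delta> n L p q" "valid_sib \<delta> n L r" "ptr_le n p r"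
  shows "\<exists>i<n. q = p(i := Suc (p i)) \<and> p i < r i"
proof -
  from assms(1) obtain i where i: "i < n" "q = p(i := Suc (p i))"
    and "\<not> (\<exists>r. valid_sib \<delta> n L r \<and> r i = p i \<and> (\<forall>j<n. p j \<le> r j))"
    unfolding sib_step_def by blast
  then have "r i \<noteq> p i" using assms(2,3) unfolding ptr_le_def by blast
  with i assms(3) show ?thesis unfolding ptr_le_def by (intro exI[of _ i]) auto
qed

text \<open>For \<open>i \<noteq> j\<close>, the valid tuple through the current \<open>i\<close>-entry has a \<open>j\<close>-entry at least the
current one, which bounds the current \<open>j\<close>-entry from above in terms of the \<open>i\<close>-entry.\<close>

lemma valid_sib_if_all_entries_extend:
  assumes sorted: "\<forall>i<n. sorted (L i)" and "in_range n L p"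
    and extend: "\<forall>i<n. \<exists>r. valid_sib \<delta> n L r \<and> r i = p i \<and> ptr_le n p r"
  shows "valid_sib \<delta> n L p"
proof -
  have "tval L p j - tval L p i \<le> (real n - 1) * \<delta>"
    if "i < n" "j < n" "i \<noteq> j" for i j
  proof -
    from extend that(1) obtain r where r: "valid_sib \<delta> n L r" "r i = p i" "ptr_le n p r"
      by blast
    then have "tval L p j \<le> tval L r j"
      using sorted that(2) tval_mono unfolding valid_sib_def in_range_def ptr_le_def by blast
    moreover have "\<bar>tval L r j - tval L r i\<bar> \<le> (real n - 1) * \<delta>"
      using r(1) that unfolding valid_sib_def by auto
    ultimately show ?thesis using r(2) unfolding tval_def by auto
  qed
  with assms(2) show ?thesis unfolding valid_sib_def by (auto simp: abs_le_iff)
qed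

lemma sib_step_exists_below_valid:
  assumes "\<forall>i<n. sorted (L i)"
    and "valid_sib \<delta> n L r" "ptr_le n p r" "\<not> valid_sib \<delta> n L p"
  shows "\<exists>q. sib_step \<delta> n L p q"
proof (rule ccontr)
  assume "\<not> (\<exists>q. sib_step \<delta> n L p q)"
  moreover have range: "in_range n L p"
    using assms(2,3) in_range_if_ptr_le unfolding valid_sib_def by blast
  ultimately have "\<forall>i<n. \<exists>r. valid_sib \<delta> n L r \<and> r i = p i \<and> ptr_le n p r"
    using assms(4) unfolding sib_step_def ptr_le_def by blast
  with assms(1,4) range show False using valid_sib_if_all_entries_extend by blast
qed

lemma sib_finds_valid:
  assumes "\<forall>i<n. sorted (L i)" "\<exists>r. valid_sib \<delta> n L r"
  shows "finds_valid (sib_step \<delta> n L) (valid_sib \<delta> n L)"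
proof -
  interpret pointer_search n L "sib_step \<delta> n L" "valid_sib \<delta> n L"
    using sib_step_advances_below_valid sib_step_exists_below_valid[OF assms(1)]
    by unfold_locales (auto simp: valid_sib_def)
  show ?thesis using finds_valid assms(2) .
qed

theorem mainTheorem2:
  fixes n :: nat and L :: "nat \<Rightarrow> real list" and \<tau>min \<tau>max \<delta> :: real
  assumes "n \<ge> 2"
    and "\<forall>i<n. sorted (L i)"
    and "0 \<le> \<tau>min" and "\<tau>min \<le> \<tau>max" and "0 \<le> \<delta>"
  shows "((\<exists>p. valid_consec \<tau>min \<tau>max n L p) \<longrightarrow>
            finds_valid (chain_step \<tau>min \<tau>max n L) (valid_consec \<tau>min \<tau>max n L))
       \<and> ((\<exists>p. valid_consec (-\<delta>) \<delta> n L p) \<longrightarrow>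
            finds_valid (chain_step (-\<delta>) \<delta> n L) (valid_consec (-\<delta>) \<delta> n L))
       \<and> ((\<exists>p. valid_sib \<delta> n L p) \<longrightarrow>
            finds_valid (sib_step \<delta> n L) (valid_sib \<delta> n L))"
  using chain_finds_valid[OF assms(2)] sib_finds_valid[OF assms(2)] by blast

end
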